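(* Let $\psi$ be a formula, let $I$ be a total interpretation (defined on all pairs $(p,(d_1,\dots,d_n))$ with $d_i\in\mathcal D$) which interprets equality as identity, and let $I^\dagger$ be any classical interpretation agreeing with $I$ on all pairs whose arguments lie in $\mathcal D$ and interpreting equality as identity on $\mathcal D\cup\{\mathsf{NOFLOW}\}$. Let $\sigma$ be a partial firing for $\psi$ and $I$, i.e. $\sigma,I\models_P\psi$ and $MFA(\sigma)$. Fix $d_0\in\mathcal D$ and define the total classical assignment $\sigma^\dagger$ by: $\sigma^\dagger(x)=\sigma(x)$ if $\sigma(x)$ is defined and $\sigma^\dagger(x)=\mathrm{false}$ otherwise; $\sigma^\dagger(\hat x)=\sigma(\hat x)$ if $\sigma(\hat x)$ is defined; $\sigma^\dagger(\hat x)=\mathsf{NOFLOW}$ if $\sigma(\hat x)$ is undefined and $\sigma(x)\neq\mathrm{true}$; $\sigma^\dagger(\hat x)=d_0$ if $\sigma(\hat x)$ is undefined and $\sigma(x)=\mathrm{true}$. Then $\sigma^\dagger$ is a classical firing for $\psi$ and $I^\dagger$, i.e. $\sigma^\dagger,I^\dagger\models_C\psi\wedge\bigwedge_{x\in V(\psi)}FA(x)$.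
   Context: Fix a set $\mathcal X$ of synchronisation variables and, for each $x\in\mathcal X$, a distinct data flow variable $\hat x$; $\hat{\mathcal X}=\{\hat x : x\in\mathcal X\}$. Fix function symbols $\mathcal F$ and predicate symbols $\mathcal P$ (with arities), $\mathcal P$ containing binary equality $=$. $\mathcal D$ is the set of ground terms over $\mathcal F$; $\mathsf{NOFLOW}$ is a constant not in $\mathcal D$. Formulas and terms: $\psi ::= \top \mid x \mid \psi_1\wedge\psi_2 \mid \neg\psi \mid p(t_1,\dots,t_n)$, $t ::= \hat x \mid f(t_1,\dots,t_n)$ (classical formulas may additionally use the constant term $\mathsf{NOFLOW}$). $\mathrm{fv}(\psi)$ is the set of variables of $\mathcal X\cup\hat{\mathcal X}$ occurring in $\psi$, and $V(\psi)=\{x\in\mathcal X : x\in\mathrm{fv}(\psi)\text{ or }\hat x\in\mathrm{fv}(\psi)\}$. Disjunction, implication and biimplication are the usual abbreviations via $\neg,\wedge$. Partial logic: an assignment $\sigma$ is a partial map sending $x\in\mathcal X$ to $\{\mathrm{true},\mathrm{false}\}$ and $\hat x$ to $\mathcal D$; an interpretation $I$ is a partial map from pairs $(p,(d_1,\dots,d_n))$ ($d_i\in\mathcal D$) to $\{\mathrm{true},\mathrm{false}\}$; $\mathrm{Val}_\sigma(\hat x)=\sigma(\hat x)$, $\mathrm{Val}_\sigma(f(\vec t))=f(\mathrm{Val}_\sigma(t_1),\dots)$, undefined if some argument is. Partial satisfaction $\models_P$ / dissatisfaction $\mathrel{=\!\!|}_P$: $\models_P\top$ always; $\models_P x$ iff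 $\sigma(x)=\mathrm{true}$; $\models_P\psi_1\wedge\psi_2$ iff both; $\models_P\neg\psi$ iff $\mathrel{=\!\!|}_P\psi$; $\models_P p(\vec t)$ iff all $\mathrm{Val}_\sigma(t_i)$ are defined and $I(p,(\mathrm{Val}_\sigma(t_i))_i)=\mathrm{true}$; $\mathrel{=\!\!|}_P\top$ never; $\mathrel{=\!\!|}_P x$ iff $\sigma(x)=\mathrm{false}$; $\mathrel{=\!\!|}_P\psi_1\wedge\psi_2$ iff one conjunct is dissatisfied; $\mathrel{=\!\!|}_P\neg\psi$ iff $\models_P\psi$; $\mathrel{=\!\!|}_P p(\vec t)$ iff all values defined and $I(\dots)=\mathrm{false}$. $MFA(\sigma)$ (meta-flow axiom): for all $x\in\mathcal X$, if $\sigma(\hat x)$ is defined then $\sigma(x)=\mathrm{true}$. A partial firing for $\psi$ and $I$ is $\sigma$ with $\sigma,I\models_P\psi$ and $MFA(\sigma)$. Classical logic: a classical assignment is a total map sending each $x\in\mathcal X$ to $\{\mathrm{true},\mathrm{false}\}$ and each $\hat x$ to $\mathcal D\cup\{\mathsf{NOFLOW}\}$; a classical interpretation is a total map from pairs $(p,(d_1,\dots,d_n))$ with $d_i\in\mathcal D\cup\{\mathsf{NOFLOW}\}$ to $\{\mathrm{true},\mathrm{false}\}$; $\mathrm{Val}_\sigma(f(t_1,\dots,t_n))=\mathsf{NOFLOW}$ if some $\mathrm{Val}_\sigma(t_i)=\mathsf{NOFLOW}$, otherwise $f(\mathrm{Val}_\sigma(t_1),\dots)$. Classical satisfaction $\models_C$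 is standard: $\top$ always; $x$ iff $\sigma(x)=\mathrm{true}$; $\wedge$ iff both; $\neg\psi$ iff not $\sigma,I\models_C\psi$; $p(\vec t)$ iff $I(p,(\mathrm{Val}_\sigma(t_i))_i)=\mathrm{true}$. The flow axiom for $x$ is $FA(x):=\neg x\leftrightarrow(\hat x=\mathsf{NOFLOW})$. A classical firing for $\psi$ and $I$ is a classical assignment $\sigma$ with $\sigma,I\models_C\psi\wedge\bigwedge_{x\in V(\psi)}FA(x)$. *)

theory Defs
  imports Main
begin

text \<open>Ground terms over the function symbols (the data domain D, restricted by arities).\<close>
datatype 'f gterm = GApp 'f "'f gterm list"

fun wf_gterm :: "('f \<Rightarrow> nat) \<Rightarrow> 'f gterm \<Rightarrow> bool" where
  "wf_gterm far (GApp f gs) = (length gs = far f \<and> (\<forall>g\<in>set gs. wf_gterm far g))"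

datatype 'f cval = Data "'f gterm" | NOFLOW

text \<open>Terms: data-flow variables (x-hat, written DVar x), function applications, and the
  constant NOFLOW (only allowed in classical formulas).\<close>
datatype ('x, 'f) trm = DVar 'x | App 'f "('x, 'f) trm list" | NoFlowT

datatype ('x, 'f, 'p) form =
    Top
  | SVar 'x
  | Conj "('x, 'f, 'p) form" "('x, 'f, 'p) form"
  | Neg "('x, 'f, 'p) form"
  | Pred 'p "('x, 'f) trm list"

definition Disj where "Disj a b = Neg (Conj (Neg a) (Neg b))"
definition Imp where "Imp a b = Disj (Neg a) b"
definition Iff where "Iff a b = Conj (Imp a b) (Imp b a)"

fun noflow_free_trm :: "('x, 'f) trm \<Rightarrow> bool" where
  "noflow_free_trm (DVar x) = True"
| "noflow_free_trm (App f ts) = (\<forall>t\<in>set ts. noflow_free_trm t)"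
| "noflow_free_trm NoFlowT = False"

fun noflow_free :: "('x, 'f, 'p) form \<Rightarrow> bool" where
  "noflow_free Top = True"
| "noflow_free (SVar x) = True"
| "noflow_free (Conj a b) = (noflow_free a \<and> noflow_free b)"
| "noflow_free (Neg a) = noflow_free a"
| "noflow_free (Pred p ts) = (\<forall>t\<in>set ts. noflow_free_trm t)"

fun wf_trm :: "('f \<Rightarrow> nat) \<Rightarrow> ('x, 'f) trm \<Rightarrow> bool" where
  "wf_trm far (DVar x) = True"
| "wf_trm far (App f ts) = (length ts = far f \<and> (\<forall>t\<in>set ts. wf_trm far t))"
| "wf_trm far NoFlowT = True"

fun wf_form :: "('f \<Rightarrow> nat) \<Rightarrow> ('p \<Rightarrow> nat) \<Rightarrow> ('x, 'f, 'p) form \<Rightarrow> bool" where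
  "wf_form far par Top = True"
| "wf_form far par (SVar x) = True"
| "wf_form far par (Conj a b) = (wf_form far par a \<and> wf_form far par b)"
| "wf_form far par (Neg a) = wf_form far par a"
| "wf_form far par (Pred p ts) = (length ts = par p \<and> (\<forall>t\<in>set ts. wf_trm far t))"

fun tvars :: "('x, 'f) trm \<Rightarrow> 'x set" where
  "tvars (DVar x) = {x}"
| "tvars (App f ts) = (\<Union>t\<in>set ts. tvars t)"
| "tvars NoFlowT = {}"

fun V :: "('x, 'f, 'p) form \<Rightarrow> 'x set" where
  "V Top = {}"
| "V (SVar x) = {x}"
| "V (Conj a b) = V a \<union> V b"
| "V (Neg a) = V a"
| "V (Pred p ts) = (\<Union>t\<in>set ts. tvars t)"

text \<open>A partial assignment: sync part (x) and data part (x-hat); None = undefined.\<close>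
type_synonym 'x sync_asg = "'x \<Rightarrow> bool option"
type_synonym ('x, 'f) data_asg = "'x \<Rightarrow> 'f gterm option"
type_synonym ('p, 'f) pinterp = "'p \<Rightarrow> 'f gterm list \<Rightarrow> bool option"

fun pval :: "('x, 'f) data_asg \<Rightarrow> ('x, 'f) trm \<Rightarrow> 'f gterm option" where
  "pval sd (DVar x) = sd x"
| "pval sd (App f ts) =
     (case those (map (pval sd) ts) of None \<Rightarrow> None | Some gs \<Rightarrow> Some (GApp f gs))"
| "pval sd NoFlowT = None"

fun psat :: "'x sync_asg \<Rightarrow> ('x, 'f) data_asg \<Rightarrow> ('p, 'f) pinterp \<Rightarrow> ('x, 'f, 'p) form \<Rightarrow> bool"
and pdissat :: "'x sync_asg \<Rightarrow> ('x, 'f) data_asg \<Rightarrow> ('p, 'f) pinterp \<Rightarrow> ('x, 'f, 'p) form \<Rightarrow> bool"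
where
  "psat ss sd I Top = True"
| "psat ss sd I (SVar x) = (ss x = Some True)"
| "psat ss sd I (Conj a b) = (psat ss sd I a \<and> psat ss sd I b)"
| "psat ss sd I (Neg a) = pdissat ss sd I a"
| "psat ss sd I (Pred p ts) =
     (\<exists>ds. those (map (pval sd) ts) = Some ds \<and> I p ds = Some True)"
| "pdissat ss sd I Top = False"
| "pdissat ss sd I (SVar x) = (ss x = Some False)"
| "pdissat ss sd I (Conj a b) = (pdissat ss sd I a \<or> pdissat ss sd I b)"
| "pdissat ss sd I (Neg a) = psat ss sd I a"
| "pdissat ss sd I (Pred p ts) =
     (\<exists>ds. those (map (pval sd) ts) = Some ds \<and> I p ds = Some False)"

definition MFA :: "'x sync_asg \<Rightarrow> ('x, 'f) data_asg \<Rightarrow> bool" where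
  "MFA ss sd \<longleftrightarrow> (\<forall>x. sd x \<noteq> None \<longrightarrow> ss x = Some True)"

definition partial_assignment :: "('f \<Rightarrow> nat) \<Rightarrow> ('x, 'f) data_asg \<Rightarrow> bool" where
  "partial_assignment far sd \<longleftrightarrow> (\<forall>x d. sd x = Some d \<longrightarrow> wf_gterm far d)"

definition partial_firing ::
  "('f \<Rightarrow> nat) \<Rightarrow> ('x, 'f, 'p) form \<Rightarrow> ('p, 'f) pinterp \<Rightarrow> 'x sync_asg \<Rightarrow> ('x, 'f) data_asg \<Rightarrow> bool" where
  "partial_firing far \<psi> I ss sd \<longleftrightarrow>
     partial_assignment far sd \<and> psat ss sd I \<psi> \<and> MFA ss sd"

type_synonym ('p, 'f) cinterp = "'p \<Rightarrow> 'f cval list \<Rightarrow> bool"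

fun cval_app :: "'f \<Rightarrow> 'f cval list \<Rightarrow> 'f cval" where
  "cval_app f vs =
     (if NOFLOW \<in> set vs then NOFLOW else Data (GApp f (map (\<lambda>v. case v of Data g \<Rightarrow> g) vs)))"

fun cvalue :: "('x \<Rightarrow> 'f cval) \<Rightarrow> ('x, 'f) trm \<Rightarrow> 'f cval" where
  "cvalue cd (DVar x) = cd x"
| "cvalue cd (App f ts) = cval_app f (map (cvalue cd) ts)"
| "cvalue cd NoFlowT = NOFLOW"

fun csat :: "('x \<Rightarrow> bool) \<Rightarrow> ('x \<Rightarrow> 'f cval) \<Rightarrow> ('p, 'f) cinterp \<Rightarrow> ('x, 'f, 'p) form \<Rightarrow> bool" where
  "csat cs cd J Top = True"
| "csat cs cd J (SVar x) = cs x"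
| "csat cs cd J (Conj a b) = (csat cs cd J a \<and> csat cs cd J b)"
| "csat cs cd J (Neg a) = (\<not> csat cs cd J a)"
| "csat cs cd J (Pred p ts) = J p (map (cvalue cd) ts)"

definition FA :: "'p \<Rightarrow> 'x \<Rightarrow> ('x, 'f, 'p) form" where
  "FA eq x = Iff (Neg (SVar x)) (Pred eq [DVar x, NoFlowT])"

definition classical_assignment :: "('f \<Rightarrow> nat) \<Rightarrow> ('x \<Rightarrow> 'f cval) \<Rightarrow> bool" where
  "classical_assignment far cd \<longleftrightarrow> (\<forall>x d. cd x = Data d \<longrightarrow> wf_gterm far d)"

text \<open>Classical firing: psi and the conjunction of FA(x) over V(psi) hold
  (the finite conjunction is rendered as a bounded universal quantifier).\<close>
definition classical_firing ::
  "('f \<Rightarrow> nat) \<Rightarrow> 'p \<Rightarrow> ('x, 'f, 'p) form \<Rightarrow> ('p, 'f) cinterp \<Rightarrow> ('x \<Rightarrow> bool) \<Rightarrow> ('x \<Rightarrow> 'f cval) \<Rightarrow> bool" where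
  "classical_firing far eq \<psi> J cs cd \<longleftrightarrow>
     classical_assignment far cd \<and> csat cs cd J \<psi> \<and> (\<forall>x\<in>V \<psi>. csat cs cd J (FA eq x))"

definition dag_sync :: "'x sync_asg \<Rightarrow> 'x \<Rightarrow> bool" where
  "dag_sync ss x = (case ss x of Some b \<Rightarrow> b | None \<Rightarrow> False)"

definition dag_data :: "'f gterm \<Rightarrow> 'x sync_asg \<Rightarrow> ('x, 'f) data_asg \<Rightarrow> 'x \<Rightarrow> 'f cval" where
  "dag_data d0 ss sd x =
     (case sd x of Some d \<Rightarrow> Data d
      | None \<Rightarrow> (if ss x = Some True then Data d0 else NOFLOW))"

end

theory Submission
  imports Defs
begin

(*
  The classical assignment sigma-dagger extends the partial firing sigma:
  every synchronisation variable and every data-flow variable that sigma defines keeps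
  its value.  For any such extension, and any classical interpretation that agrees with
  the partial one on well-formed data, partial satisfaction implies classical satisfaction
  and partial dissatisfaction implies classical falsity (simultaneous induction on the
  formula; in the predicate case all argument terms have partial values in D, and their
  classical values are the same data).  Hence sigma-dagger satisfies psi.  The flow axioms
  hold because, by the meta-flow axiom, sigma-dagger sends x-hat to NOFLOW exactly when
  x is not true, and the classical interpretation treats equality as identity.
*)

definition extends_data :: "('x, 'f) data_asg \<Rightarrow> ('x \<Rightarrow> 'f cval) \<Rightarrow> bool" where
  "extends_data sd cd \<longleftrightarrow> (\<forall>x d. sd x = Some d \<longrightarrow> cd x = Data d)"

definition extends_sync :: "'x sync_asg \<Rightarrow> ('x \<Rightarrow> bool) \<Rightarrow> bool" where
  "extends_sync ss cs \<longleftrightarrow> (\<forall>x b. ss x = Some b \<longrightarrow> cs x = b)"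

lemma those_eq_Some_iff: "those xs = Some ys \<longleftrightarrow> xs = map Some ys"
  by (induction xs arbitrary: ys) (auto split: option.splits)

lemma map_transfer_Some:
  assumes "map f xs = map Some ys"
    and "\<And>x y. x \<in> set xs \<Longrightarrow> f x = Some y \<Longrightarrow> g x = h y"
  shows "map g xs = map h ys"
  using assms by (induction xs arbitrary: ys) auto

lemma cvalue_pval:
  assumes ext: "extends_data sd cd"
  shows "pval sd t = Some d \<Longrightarrow> cvalue cd t = Data d"
proof (induction t arbitrary: d)
  case (DVar x)
  then show ?case using ext by (simp add: extends_data_def)
next
  case (App f ts)
  then obtain gs where gs: "map (pval sd) ts = map Some gs" and d: "d = GApp f gs"
    by (auto simp: those_eq_Some_iff split: option.splits)
  have "map (cvalue cd) ts = map Data gs"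
    using gs by (rule map_transfer_Some) (use App.IH in blast)
  then show ?case using d by (auto simp: comp_def)
qed simp

lemma pval_wf:
  assumes pa: "partial_assignment far sd"
  shows "wf_trm far t \<Longrightarrow> pval sd t = Some d \<Longrightarrow> wf_gterm far d"
proof (induction t arbitrary: d)
  case (DVar x)
  then show ?case using pa by (simp add: partial_assignment_def)
next
  case (App f ts)
  then obtain gs where gs: "map (pval sd) ts = map Some gs" and d: "d = GApp f gs"
    by (auto simp: those_eq_Some_iff split: option.splits)
  have "length gs = far f"
    using App.prems(1) arg_cong[OF gs, of length] by simp
  moreover have "wf_gterm far g" if "g \<in> set gs" for g
  proof -
    from that have "Some g \<in> set (map (pval sd) ts)" unfolding gs by simp
    then obtain t where "t \<in> set ts" "pval sd t = Some g" by auto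
    then show ?thesis using App by auto
  qed
  ultimately show ?case using d by simp
qed simp

lemma psat_imp_csat:
  assumes pa: "partial_assignment far sd"
    and ext_d: "extends_data sd cd" and ext_s: "extends_sync ss cs"
    and agree: "\<And>p ds. length ds = par p \<Longrightarrow> (\<forall>d\<in>set ds. wf_gterm far d) \<Longrightarrow>
                        I p ds = Some (J p (map Data ds))"
  shows "wf_form far par \<psi> \<Longrightarrow>
     (psat ss sd I \<psi> \<longrightarrow> csat cs cd J \<psi>) \<and> (pdissat ss sd I \<psi> \<longrightarrow> \<not> csat cs cd J \<psi>)"
proof (induction \<psi>)
  case (SVar x)
  then show ?case using ext_s by (auto simp: extends_sync_def)
next
  case (Pred p ts)
  have "I p ds = Some (J p (map (cvalue cd) ts))" if ds: "those (map (pval sd) ts) = Some ds" for ds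
  proof -
    from ds have vals: "map (pval sd) ts = map Some ds" by (simp add: those_eq_Some_iff)
    have "map (cvalue cd) ts = map Data ds"
      using vals by (rule map_transfer_Some) (use cvalue_pval[OF ext_d] in blast)
    moreover have "length ds = par p"
      using Pred arg_cong[OF vals, of length] by simp
    moreover have "\<forall>d\<in>set ds. wf_gterm far d"
    proof
      fix d assume "d \<in> set ds"
      then have "Some d \<in> set (map (pval sd) ts)" unfolding vals by simp
      then show "wf_gterm far d" using Pred pval_wf[OF pa] by auto
    qed
    ultimately show ?thesis using agree by simp
  qed
  then show ?case by auto
qed auto

lemma dag_data_extends: "extends_data sd (dag_data d0 ss sd)"
  by (simp add: extends_data_def dag_data_def)

lemma dag_sync_extends: "extends_sync ss (dag_sync ss)"
  by (simp add: extends_sync_def dag_sync_def)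

lemma dag_classical_assignment:
  assumes "partial_assignment far sd" and "wf_gterm far d0"
  shows "classical_assignment far (dag_data d0 ss sd)"
  using assms
  by (auto simp: classical_assignment_def partial_assignment_def dag_data_def
           split: option.splits if_splits)

lemma dag_noflow_iff:
  assumes "MFA ss sd"
  shows "(\<not> dag_sync ss x) \<longleftrightarrow> dag_data d0 ss sd x = NOFLOW"
  using assms unfolding MFA_def dag_sync_def dag_data_def
  by (cases "sd x"; cases "ss x") auto

lemma csat_FA: "csat cs cd J (FA eq x) \<longleftrightarrow> ((\<not> cs x) \<longleftrightarrow> J eq [cd x, NOFLOW])"
  by (auto simp: FA_def Iff_def Imp_def Disj_def)

theorem mainTheorem4:
  fixes far :: "'f \<Rightarrow> nat" and par :: "'p \<Rightarrow> nat" and eq :: 'p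
    and \<psi> :: "('x, 'f, 'p) form"
    and I :: "('p, 'f) pinterp" and Idag :: "('p, 'f) cinterp"
    and ss :: "'x sync_asg" and sd :: "('x, 'f) data_asg" and d0 :: "'f gterm"
  assumes eq_arity: "par eq = 2"
    and psi_formula: "noflow_free \<psi>" and psi_wf: "wf_form far par \<psi>"
    and I_total: "\<And>p ds. length ds = par p \<Longrightarrow> (\<forall>d\<in>set ds. wf_gterm far d) \<Longrightarrow> I p ds \<noteq> None"
    and I_eq: "\<And>d1 d2. wf_gterm far d1 \<Longrightarrow> wf_gterm far d2 \<Longrightarrow> I eq [d1, d2] = Some (d1 = d2)"
    and Idag_agree: "\<And>p ds. length ds = par p \<Longrightarrow> (\<forall>d\<in>set ds. wf_gterm far d) \<Longrightarrow>
                        I p ds = Some (Idag p (map Data ds))"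
    and Idag_eq: "\<And>v1 v2. (\<forall>d. v1 = Data d \<longrightarrow> wf_gterm far d) \<Longrightarrow> (\<forall>d. v2 = Data d \<longrightarrow> wf_gterm far d) \<Longrightarrow>
                        Idag eq [v1, v2] = (v1 = v2)"
    and firing: "partial_firing far \<psi> I ss sd"
    and d0_in_D: "wf_gterm far d0"
  shows "classical_firing far eq \<psi> Idag (dag_sync ss) (dag_data d0 ss sd)"
proof -
  let ?cs = "dag_sync ss" and ?cd = "dag_data d0 ss sd"
  have pa: "partial_assignment far sd" and ps: "psat ss sd I \<psi>" and mfa: "MFA ss sd"
    using firing by (auto simp: partial_firing_def)
  have ca: "classical_assignment far ?cd"
    using pa d0_in_D by (rule dag_classical_assignment)
  have sat: "csat ?cs ?cd Idag \<psi>"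
    using psat_imp_csat[where J = Idag, OF pa dag_data_extends dag_sync_extends Idag_agree psi_wf] ps by blast
  have flow: "csat ?cs ?cd Idag (FA eq x)" for x
  proof -
    have "\<forall>d. ?cd x = Data d \<longrightarrow> wf_gterm far d"
      using ca by (simp add: classical_assignment_def)
    then have "Idag eq [?cd x, NOFLOW] \<longleftrightarrow> ?cd x = NOFLOW"
      using Idag_eq by simp
    then show ?thesis
      using dag_noflow_iff[OF mfa] by (simp add: csat_FA)
  qed
  show ?thesis using ca sat flow by (simp add: classical_firing_def)
qed

end
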